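(* Let $h_1,\dots,h_N\in\mathbb{C}$. Define $|h_{IDEAL}| = \max\{ |\sum_{i=1}^N b_i h_i| : b_i\in\mathbb{C},\ |b_i|\le 1\}$ and $|h_{REAL}| = \max\{ |\sum_{i=1}^N b_i h_i| : b_i \in\{0,1\}\}$. Then $|h_{REAL}| \ge \frac{|h_{IDEAL}|}{\pi}$.
   Context: Here $h_i$ is the (complex) channel contribution of the $i$-th element of a passive reflecting surface; $h_{IDEAL}$ corresponds to elements whose complex reflection coefficient can be set arbitrarily with magnitude at most $1$, and $h_{REAL}$ to elements restricted to two states (off $=0$, on $=1$). The direct-path term is not included. *)

theory Defs
  imports "HOL-Analysis.Analysis"
begin

definition h_ideal :: "nat \<Rightarrow> (nat \<Rightarrow> complex) \<Rightarrow> real" where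
  "h_ideal N h = Sup {cmod (\<Sum>i=1..N. b i * h i) | b. \<forall>i\<in>{1..N}. cmod (b i) \<le> 1}"

definition h_real :: "nat \<Rightarrow> (nat \<Rightarrow> complex) \<Rightarrow> real" where
  "h_real N h = Max {cmod (\<Sum>i=1..N. b i * h i) | b. \<forall>i\<in>{1..N}. b i \<in> {0, 1}}"

end

theory Submission
  imports Defs
begin

text \<open>
  Rotate the plane by an angle \<open>t\<close> and switch on exactly the elements whose rotated
  contribution has positive real part. The resulting sum has norm at least
  \<open>\<Sum>i. max 0 (Re (cis (-t) * h i))\<close>. Averaged over \<open>t \<in> [0, 2\<pi>]\<close> this quantity
  equals \<open>(\<Sum>i. |h i|) / \<pi>\<close>, since the positive part of \<open>cos\<close> has integral \<open>2\<close> over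
  a period; so some \<open>t\<close> reaches the average, while the ideal surface achieves at
  most \<open>\<Sum>i. |h i|\<close>.
\<close>

lemma h_ideal_le_sum_norm: "h_ideal N h \<le> (\<Sum>i=1..N. cmod (h i))"
  unfolding h_ideal_def
proof (rule cSup_least)
  show "{cmod (\<Sum>i=1..N. b i * h i) | b. \<forall>i\<in>{1..N}. cmod (b i) \<le> 1} \<noteq> {}"
    by (auto intro: exI[of _ "\<lambda>_. 0"])
next
  fix x assume "x \<in> {cmod (\<Sum>i=1..N. b i * h i) | b. \<forall>i\<in>{1..N}. cmod (b i) \<le> 1}"
  then obtain b where x: "x = cmod (\<Sum>i=1..N. b i * h i)" and b: "\<forall>i\<in>{1..N}. cmod (b i) \<le> 1"
    by auto
  have "x \<le> (\<Sum>i=1..N. cmod (b i * h i))"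
    unfolding x by (rule norm_sum)
  also have "\<dots> \<le> (\<Sum>i=1..N. cmod (h i))"
    using b by (intro sum_mono) (auto simp: norm_mult intro!: mult_left_le_one_le)
  finally show "x \<le> (\<Sum>i=1..N. cmod (h i))" .
qed

lemma finite_h_real_values:
  fixes N :: nat and h :: "nat \<Rightarrow> complex"
  shows "finite {cmod (\<Sum>i=1..N. b i * h i) | b. \<forall>i\<in>{1..N}. b i \<in> {0, 1}}"
proof (rule finite_subset)
  show "{cmod (\<Sum>i=1..N. b i * h i) | b. \<forall>i\<in>{1..N}. b i \<in> {0, 1}}
      \<subseteq> (\<lambda>B. cmod (\<Sum>i\<in>B. h i)) ` Pow {1..N}"
  proof
    fix x assume "x \<in> {cmod (\<Sum>i=1..N. b i * h i) | b. \<forall>i\<in>{1..N}. b i \<in> {0, 1}}"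
    then obtain b where x: "x = cmod (\<Sum>i=1..N. b i * h i)" and b: "\<forall>i\<in>{1..N}. b i \<in> {0, 1}"
      by auto
    have "(\<Sum>i=1..N. b i * h i) = (\<Sum>i=1..N. if b i = 1 then h i else 0)"
      using b by (intro sum.cong) auto
    also have "\<dots> = (\<Sum>i\<in>{i\<in>{1..N}. b i = 1}. h i)"
      by (rule sum.inter_filter[symmetric]) simp
    finally show "x \<in> (\<lambda>B. cmod (\<Sum>i\<in>B. h i)) ` Pow {1..N}"
      unfolding x by auto
  qed
qed simp

lemma sum_pos_part_Re_rotation_le_h_real:
  "(\<Sum>i=1..N. max 0 (Re (cis (-t) * h i))) \<le> h_real N h"
proof -
  define b where "b i = (if 0 < Re (cis (-t) * h i) then 1 else 0 :: complex)" for i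
  have "max 0 (Re (cis (-t) * h i)) = Re (cis (-t) * (b i * h i))" for i
    by (simp add: b_def)
  then have "(\<Sum>i=1..N. max 0 (Re (cis (-t) * h i))) = Re (cis (-t) * (\<Sum>i=1..N. b i * h i))"
    by (simp add: sum_distrib_left Re_sum)
  also have "\<dots> \<le> cmod (cis (-t) * (\<Sum>i=1..N. b i * h i))"
    by (rule complex_Re_le_cmod)
  also have "\<dots> = cmod (\<Sum>i=1..N. b i * h i)"
    by (simp add: norm_mult)
  also have "\<dots> \<le> h_real N h"
    unfolding h_real_def
    by (rule Max_ge[OF finite_h_real_values], rule CollectI, rule exI[of _ b]) (simp add: b_def)
  finally show ?thesis .
qed

lemma has_integral_pos_part_cos: "((\<lambda>t. max 0 (cos t)) has_integral 2) {-pi..pi}"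
proof -
  have left: "((\<lambda>t. max 0 (cos t)) has_integral 0) {-pi..-pi/2}"
  proof (rule has_integral_eq[of _ "\<lambda>_. 0"])
    fix x assume "x \<in> {-pi..-pi/2}"
    then have "0 \<le> cos (x + pi)" by (intro cos_ge_zero) auto
    then show "0 = max 0 (cos x)" by simp
  qed auto
  have right: "((\<lambda>t. max 0 (cos t)) has_integral 0) {pi/2..pi}"
  proof (rule has_integral_eq[of _ "\<lambda>_. 0"])
    fix x assume "x \<in> {pi/2..pi}"
    then have "0 \<le> cos (x - pi)" by (intro cos_ge_zero) auto
    then show "0 = max 0 (cos x)" by simp
  qed auto
  have middle: "((\<lambda>t. max 0 (cos t)) has_integral 2) {-pi/2..pi/2}"
  proof (rule has_integral_eq[of _ cos])
    fix x assume "x \<in> {-pi/2..pi/2}"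
    then have "cos x \<ge> 0" by (intro cos_ge_zero) auto
    then show "cos x = max 0 (cos x)" by simp
  next
    have "(cos has_integral (sin (pi/2) - sin (-pi/2))) {-pi/2..pi/2}"
      by (intro fundamental_theorem_of_calculus)
        (auto intro!: derivative_eq_intros
          simp: has_real_derivative_iff_has_vector_derivative[symmetric])
    then show "(cos has_integral 2) {-pi/2..pi/2}" by simp
  qed
  have "((\<lambda>t. max 0 (cos t)) has_integral (0 + 2)) {-pi..pi/2}"
    by (rule has_integral_combine[OF _ _ left middle]) auto
  from has_integral_combine[OF _ _ this right] show ?thesis by simp
qed

lemma integral_pos_part_cos_shift:
  assumes "-pi < a" "a \<le> pi"
  shows "integral {0..2*pi} (\<lambda>t. max 0 (cos (t - a))) = 2"
proof -
  let ?f = "\<lambda>t::real. max 0 (cos t)"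
  have cont: "continuous_on S ?f" for S
    by (intro continuous_intros)
  have "integral {0..2*pi} (\<lambda>t. ?f (t - a)) = integral {-a..2*pi - a} ?f"
    using integral_shift[where a=0 and b="2*pi" and c="-a" and f="?f"] cont by (simp add: o_def)
  also have "\<dots> = integral {-a..pi} ?f + integral {pi..2*pi - a} ?f"
    using Henstock_Kurzweil_Integration.integral_combine[of "-a" pi "2*pi - a" ?f] assms integrable_continuous_real[OF cont]
    by auto
  also have "integral {pi..2*pi - a} ?f = integral {-pi..-a} (?f \<circ> (\<lambda>x. x + 2*pi))"
    using integral_shift[where a="-pi" and b="-a" and c="2*pi" and f="?f"] cont by simp
  also have "?f \<circ> (\<lambda>x. x + 2*pi) = ?f"
    by (simp add: fun_eq_iff)
  also have "integral {-a..pi} ?f + integral {-pi..-a} ?f = integral {-pi..pi} ?f"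
    using Henstock_Kurzweil_Integration.integral_combine[of "-pi" "-a" pi ?f] assms integrable_continuous_real[OF cont]
    by auto
  also have "\<dots> = 2"
    using has_integral_pos_part_cos by (rule integral_unique)
  finally show ?thesis .
qed

lemma Re_cis_minus_mult: "Re (cis (-t) * z) = cmod z * cos (t - Arg z)"
proof -
  have "cis (-t) * z = cis (-t) * (complex_of_real (cmod z) * cis (Arg z))"
    using rcis_cmod_Arg[of z] by (simp add: rcis_def)
  also have "\<dots> = complex_of_real (cmod z) * cis (Arg z - t)"
    by (simp add: cis_mult algebra_simps)
  finally show ?thesis
    by (simp add: cos_diff mult.commute)
qed

lemma integral_pos_part_Re_rotation:
  "integral {0..2*pi} (\<lambda>t. max 0 (Re (cis (-t) * z))) = 2 * cmod z"
proof -
  have "max 0 (cmod z * x) = cmod z * max 0 x" for x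
    by (simp add: max_mult_distrib_left)
  then have "integral {0..2*pi} (\<lambda>t. max 0 (Re (cis (-t) * z)))
      = cmod z * integral {0..2*pi} (\<lambda>t. max 0 (cos (t - Arg z)))"
    unfolding Re_cis_minus_mult by simp
  then show ?thesis
    using integral_pos_part_cos_shift[OF Arg_bounded[of z, THEN conjunct1]
        Arg_bounded[of z, THEN conjunct2]]
    by simp
qed

lemma continuous_on_exists_ge_average:
  fixes f :: "real \<Rightarrow> real"
  assumes "continuous_on {a..b} f" "a < b"
  shows "\<exists>t\<in>{a..b}. integral {a..b} f / (b - a) \<le> f t"
proof (rule ccontr)
  assume "\<not> ?thesis"
  then have "f t < integral {a..b} f / (b - a)" if "t \<in> {a..b}" for t
    using that by (simp add: not_le)
  then have "integral {a..b} f < integral {a..b} (\<lambda>_. integral {a..b} f / (b - a))"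
    using assms by (intro integral_less_real) auto
  with \<open>a < b\<close> show False
    by simp
qed

theorem theorem2:
  fixes N :: nat and h :: "nat \<Rightarrow> complex"
  shows "h_real N h \<ge> h_ideal N h / pi"
proof -
  define F where "F t = (\<Sum>i=1..N. max 0 (Re (cis (-t) * h i)))" for t
  have "continuous_on {0..2*pi} F"
    unfolding F_def by (intro continuous_intros)
  then obtain t where t: "integral {0..2*pi} F / (2*pi - 0) \<le> F t"
    using continuous_on_exists_ge_average[of 0 "2*pi" F] by auto
  have "integral {0..2*pi} F = (\<Sum>i=1..N. 2 * cmod (h i))"
    unfolding F_def integral_pos_part_Re_rotation[symmetric]
    by (intro integral_sum) (auto intro!: integrable_continuous_real continuous_intros)
  with t have "(\<Sum>i=1..N. cmod (h i)) / pi \<le> F t"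
    by (simp add: sum_distrib_left[symmetric])
  also have "\<dots> \<le> h_real N h"
    unfolding F_def by (rule sum_pos_part_Re_rotation_le_h_real)
  finally show ?thesis
    using h_ideal_le_sum_norm[of N h] divide_right_mono[of _ _ pi] by fastforce
qed

end
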